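(* Let $q$ be a prime power and $m\ge1$. Let $H\subseteq\mathbb{F}_{q^m}$ be an $\mathbb{F}_q$-subspace of dimension $h$ over $\mathbb{F}_q$ with $1\le h\le m-2$. Let $x\in\mathbb{F}_{q^m}\setminus H$ and $y\in\mathbb{F}_{q^m}$. Then there exists $\alpha\in\mathbb{F}_{q^m}\setminus H$ such that $x+\alpha y\notin H\oplus\langle\alpha\rangle$, where $\langle\alpha\rangle$ denotes the $\mathbb{F}_q$-span of $\alpha$. *)

theory Defs
  imports "HOL-Computational_Algebra.Primes"
begin

definition is_subfield :: "'a::field set \<Rightarrow> bool" where
  "is_subfield F \<longleftrightarrow> 0 \<in> F \<and> 1 \<in> F \<and>
     (\<forall>x\<in>F. \<forall>y\<in>F. x + y \<in> F \<and> x * y \<in> F) \<and>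
     (\<forall>x\<in>F. - x \<in> F) \<and> (\<forall>x\<in>F. x \<noteq> 0 \<longrightarrow> inverse x \<in> F)"

definition F_subspace :: "'a::field set \<Rightarrow> 'a set \<Rightarrow> bool" where
  "F_subspace F H \<longleftrightarrow> 0 \<in> H \<and> (\<forall>x\<in>H. \<forall>y\<in>H. x + y \<in> H) \<and>
     (\<forall>c\<in>F. \<forall>x\<in>H. c * x \<in> H)"

definition F_span :: "'a::field set \<Rightarrow> 'a set \<Rightarrow> 'a set" where
  "F_span F S = {\<Sum>s\<in>T. c s * s | T c. finite T \<and> T \<subseteq> S \<and> (\<forall>s\<in>T. c s \<in> F)}"

definition F_indep :: "'a::field set \<Rightarrow> 'a set \<Rightarrow> bool" where
  "F_indep F S \<longleftrightarrow> (\<forall>T c. finite T \<and> T \<subseteq> S \<and> (\<forall>s\<in>T. c s \<in> F) \<and>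
       (\<Sum>s\<in>T. c s * s) = 0 \<longrightarrow> (\<forall>s\<in>T. c s = 0))"

definition F_dim_eq :: "'a::field set \<Rightarrow> 'a set \<Rightarrow> nat \<Rightarrow> bool" where
  "F_dim_eq F H h \<longleftrightarrow> (\<exists>B. finite B \<and> card B = h \<and> B \<subseteq> H \<and> F_indep F B \<and> F_span F B = H)"

text \<open>The sum H + <a> (direct when a is not in H).\<close>
definition F_sum_line :: "'a::field set \<Rightarrow> 'a set \<Rightarrow> 'a \<Rightarrow> 'a set" where
  "F_sum_line F H a = {u + c * a | u c. u \<in> H \<and> c \<in> F}"

definition prime_power :: "nat \<Rightarrow> bool" where
  "prime_power q \<longleftrightarrow> (\<exists>p k. prime p \<and> k \<ge> 1 \<and> q = p ^ k)"

end

theory Submission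
  imports Defs "HOL-Library.FuncSet"
begin

text \<open>
  A counting argument. If \<open>x + \<alpha> y = u + c \<alpha>\<close> with \<open>u \<in> H\<close>, \<open>c \<in> F\<close>, then either \<open>c = y\<close>,
  forcing \<open>x = u \<in> H\<close>, or \<open>\<alpha> = (u - x) / (y - c)\<close>. So every bad \<open>\<alpha>\<close> lies in \<open>H\<close> or among
  at most \<open>q \<cdot> |H|\<close> quotients, i.e. in a set of size at most \<open>(q + 1) q\<^sup>h < q\<^sup>h\<^sup>+\<^sup>2 \<le> q\<^sup>m\<close>.
\<close>

lemma card_F_span_le:
  fixes F :: "'a::field set"
  assumes "finite B" "0 \<in> F" "finite F"
  shows "card (F_span F B) \<le> card F ^ card B"
proof -
  let ?comb = "\<lambda>c. \<Sum>s\<in>B. c s * s"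
  have span_sub: "F_span F B \<subseteq> ?comb ` (B \<rightarrow>\<^sub>E F)"
  proof
    fix z assume "z \<in> F_span F B"
    then obtain T c where T: "finite T" "T \<subseteq> B" "\<forall>s\<in>T. c s \<in> F" and z: "z = (\<Sum>s\<in>T. c s * s)"
      unfolding F_span_def by blast
    define c' where "c' = restrict (\<lambda>s. if s \<in> T then c s else 0) B"
    have "c' \<in> B \<rightarrow>\<^sub>E F" using T assms(2) unfolding c'_def by auto
    moreover have "?comb c' = (\<Sum>s\<in>B. if s \<in> T then c s * s else 0)"
      unfolding c'_def by (rule sum.cong) auto
    moreover have "\<dots> = z"
      using T assms(1) z by (simp add: sum.If_cases Int_absorb1 Int_commute)
    ultimately show "z \<in> ?comb ` (B \<rightarrow>\<^sub>E F)" by force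
  qed
  have finite_PiE_B: "finite (B \<rightarrow>\<^sub>E F)" using assms by (auto intro!: finite_PiE)
  have "card (F_span F B) \<le> card (?comb ` (B \<rightarrow>\<^sub>E F))"
    using span_sub finite_PiE_B by (intro card_mono) auto
  also have "\<dots> \<le> card (B \<rightarrow>\<^sub>E F)" using finite_PiE_B by (rule card_image_le)
  also have "\<dots> = card F ^ card B" using assms by (simp add: card_PiE)
  finally show ?thesis .
qed

lemma card_le_if_F_dim_eq:
  fixes F :: "'a::field set"
  assumes "F_dim_eq F H h" "0 \<in> F" "finite F"
  shows "card H \<le> card F ^ h"
  using assms card_F_span_le unfolding F_dim_eq_def by blast

lemma card_subfield_ge_2:
  fixes F :: "'a::field set"
  assumes "is_subfield F" "finite F"
  shows "card F \<ge> 2"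
proof -
  have "{0, 1} \<subseteq> F" using assms(1) unfolding is_subfield_def by auto
  then have "card {0::'a, 1} \<le> card F" using assms(2) by (rule card_mono[rotated])
  then show ?thesis by simp
qed

lemma F_sum_line_mem_imp_quotient:
  fixes F :: "'a::field set"
  assumes "x + \<alpha> * y \<in> F_sum_line F H \<alpha>" "x \<notin> H"
  shows "\<alpha> \<in> (\<lambda>(c, u). (u - x) / (y - c)) ` (F \<times> H)"
proof -
  obtain u c where u: "u \<in> H" "c \<in> F" "x + \<alpha> * y = u + c * \<alpha>"
    using assms(1) unfolding F_sum_line_def by blast
  have "c \<noteq> y"
  proof
    assume "c = y"
    with u(3) have "x = u" by (simp add: mult.commute)
    with u(1) assms(2) show False by simp
  qed
  with u(3) have "\<alpha> = (u - x) / (y - c)" by (simp add: field_simps)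
  with u(1,2) show ?thesis by force
qed

lemma card_Un_quotients_le:
  fixes F :: "'a::field set"
  assumes "finite F" "finite H"
  shows "card (H \<union> (\<lambda>(c, u). (u - x) / (y - c)) ` (F \<times> H)) \<le> (card F + 1) * card H"
proof -
  let ?Q = "(\<lambda>(c, u). (u - x) / (y - c)) ` (F \<times> H)"
  have "card (H \<union> ?Q) \<le> card H + card ?Q" by (rule card_Un_le)
  also have "card ?Q \<le> card (F \<times> H)" using assms by (intro card_image_le) simp
  also have "card (F \<times> H) = card F * card H" by (rule card_cartesian_product)
  finally show ?thesis by simp
qed

lemma succ_mult_power_less_power_add_2:
  fixes q h :: nat
  assumes "q \<ge> 2"
  shows "(q + 1) * q ^ h < q ^ (h + 2)"
proof -
  have "q + 1 < q * q" using assms mult_le_mono1[OF assms, of q] by linarith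
  then have "(q + 1) * q ^ h < q * q * q ^ h"
    using assms by (intro mult_strict_right_mono) auto
  then show ?thesis by (simp add: power_add mult.commute mult.left_commute)
qed

theorem lemma3p7:
  fixes F :: "'a::{field,finite} set" and q m h :: nat and H :: "'a set" and x y :: 'a
  assumes "is_subfield F" and "card F = q" and "prime_power q"
    and "m \<ge> 1" and "card (UNIV :: 'a set) = q ^ m"
    and "F_subspace F H" and "F_dim_eq F H h" and "1 \<le> h" and "h \<le> m - 2"
    and "x \<notin> H"
  shows "\<exists>\<alpha>. \<alpha> \<notin> H \<and> x + \<alpha> * y \<notin> F_sum_line F H \<alpha>"
proof -
  define bad where "bad = H \<union> (\<lambda>(c, u). (u - x) / (y - c)) ` (F \<times> H)"
  have q2: "q \<ge> 2" using card_subfield_ge_2[OF assms(1)] assms(2) by simp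
  have "0 \<in> F" using assms(1) unfolding is_subfield_def by simp
  then have "card H \<le> q ^ h" using card_le_if_F_dim_eq[OF assms(7)] assms(2) by simp
  then have "card bad \<le> (q + 1) * q ^ h"
    using card_Un_quotients_le[of F H x y] assms(2) unfolding bad_def
    by (metis finite mult_le_mono2 order_trans)
  also have "\<dots> < q ^ (h + 2)" using q2 by (rule succ_mult_power_less_power_add_2)
  also have "\<dots> \<le> q ^ m" using assms(8,9) q2 by (intro power_increasing) auto
  finally obtain \<alpha> where "\<alpha> \<notin> bad"
    using assms(5) by (metis UNIV_I card_mono finite not_le subsetI)
  then show ?thesis
    using F_sum_line_mem_imp_quotient[OF _ assms(10)] unfolding bad_def by blast
qed

end
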